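(* Let $K_1,\dots,K_N$ be kernels on $X\times X$, let $k\le N$, and let $\mathcal{K}=\{\sum_{i=1}^N w_iK_i:\ \sum_{i=1}^N w_i=1\ \text{and}\ \sum_{i=1}^N[w_i\neq 0]\le k\}$. Then \[ d_\phi(\mathcal{K})\leq 2k\log(k)+2k\log(4eN). \]
   Context: $[w_i\ne 0]$ is $1$ if $w_i\neq0$ and $0$ otherwise. For a class $\mathcal{K}$ of real functions on $X\times X$: $\mathcal{K}$ pseudo-shatters pairs $(x_1,x_1'),\dots,(x_r,x_r')$ if there exist thresholds $t_1,\dots,t_r$ such that for every $b\in\{-1,+1\}^r$ there is $K\in\mathcal{K}$ with $\mathrm{sign}(K(x_i,x_i')-t_i)=b_i$ for all $i$; the pseudodimension $d_\phi(\mathcal{K})$ is the largest $r$ such that some set of $r$ pairs is pseudo-shattered by $\mathcal{K}$. *)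

theory Defs
  imports Complex_Main "HOL-Library.Extended_Real"
begin

definition is_kernel :: "('x \<Rightarrow> 'x \<Rightarrow> real) \<Rightarrow> bool" where
  "is_kernel K \<longleftrightarrow> (\<forall>x y. K x y = K y x) \<and>
     (\<forall>(n::nat) (xs::nat \<Rightarrow> 'x) (c::nat \<Rightarrow> real).
        (\<Sum>i<n. \<Sum>j<n. c i * c j * K (xs i) (xs j)) \<ge> 0)"

definition pseudo_shatters ::
  "('x \<Rightarrow> 'x \<Rightarrow> real) set \<Rightarrow> ('x \<times> 'x) list \<Rightarrow> bool" where
  "pseudo_shatters KK ps \<longleftrightarrow>
     (\<exists>t :: nat \<Rightarrow> real. \<forall>b :: nat \<Rightarrow> real. (\<forall>i<length ps. b i \<in> {-1, 1}) \<longrightarrow>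
        (\<exists>K\<in>KK. \<forall>i<length ps. sgn (K (fst (ps ! i)) (snd (ps ! i)) - t i) = b i))"

definition pseudodim :: "('x \<Rightarrow> 'x \<Rightarrow> real) set \<Rightarrow> enat" where
  "pseudodim KK = Sup {enat (length ps) | ps. distinct ps \<and> pseudo_shatters KK ps}"

definition sparse_comb_class ::
  "(nat \<Rightarrow> 'x \<Rightarrow> 'x \<Rightarrow> real) \<Rightarrow> nat \<Rightarrow> nat \<Rightarrow> ('x \<Rightarrow> 'x \<Rightarrow> real) set" where
  "sparse_comb_class Ks N k =
     {(\<lambda>x y. \<Sum>i=1..N. w i * Ks i x y) | w :: nat \<Rightarrow> real.
        (\<Sum>i=1..N. w i) = 1 \<and> card {i\<in>{1..N}. w i \<noteq> 0} \<le> k}"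

end

theory Submission
  imports Defs "HOL-Library.Function_Algebras" "HOL-Analysis.Harmonic_Numbers"
begin

text \<open>
  Evaluated at the r pairs (x_j, x_j'), a member of the class with support S is the linear
  function w \<mapsto> (\<Sum>i\<in>S. w i * K_i(x_j, x_j')) of the weights. Strict threshold dichotomies
  of linear functions in |S| parameters shatter at most |S| points (a nonzero linear dependence
  among the points yields a forbidden sign pattern), so by the Sauer--Shelah--Pajor lemma a
  fixed support realises at most (r + 1)^k sign patterns. There are at most (N + 1)^k supports,
  hence 2^r \<le> (N + 1)^k (r + 1)^k, and solving r ln 2 \<le> k ln (N + 1) + k ln (r + 1) for r
  gives the bound.
\<close>

subsection \<open>Counting and shattering of set families\<close>

lemma card_subsets_card_le:
  assumes "finite U"
  shows "card {A. A \<subseteq> U \<and> card A \<le> k} \<le> (card U + 1) ^ k"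
proof -
  let ?L = "{xs. set xs \<subseteq> insert None (Some ` U) \<and> length xs = k}"
  have "{A. A \<subseteq> U \<and> card A \<le> k} \<subseteq> (\<lambda>xs. {x. Some x \<in> set xs}) ` ?L"
  proof
    fix A assume "A \<in> {A. A \<subseteq> U \<and> card A \<le> k}"
    hence AU: "A \<subseteq> U" and Ak: "card A \<le> k" by auto
    obtain xs where xs: "set xs = A" "distinct xs"
      using finite_distinct_list finite_subset[OF AU assms] by blast
    define ys where "ys = map Some xs @ replicate (k - length xs) None"
    have "length xs = card A" using xs distinct_card by fastforce
    hence "ys \<in> ?L" using xs AU Ak by (auto simp: ys_def)
    moreover have "A = {x. Some x \<in> set ys}" using xs by (auto simp: ys_def)
    ultimately show "A \<in> (\<lambda>xs. {x. Some x \<in> set xs}) ` ?L" by blast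
  qed
  hence "card {A. A \<subseteq> U \<and> card A \<le> k} \<le> card ((\<lambda>xs. {x. Some x \<in> set xs}) ` ?L)"
    by (intro card_mono) (simp_all add: assms finite_lists_length_eq)
  also have "\<dots> \<le> card ?L"
    by (intro card_image_le) (simp add: assms finite_lists_length_eq)
  also have "\<dots> = (card U + 1) ^ k"
    using assms by (simp add: card_lists_length_eq card_image)
  finally show ?thesis .
qed

definition shatters :: "'a set set \<Rightarrow> 'a set \<Rightarrow> bool" where
  "shatters F B \<longleftrightarrow> (\<forall>C\<subseteq>B. \<exists>X\<in>F. X \<inter> B = C)"

lemma card_eq_card_remove_plus_card_pairs:
  assumes "finite F"
  shows "card F = card ((\<lambda>X. X - {x}) ` F) + card {X\<in>F. x \<notin> X \<and> insert x X \<in> F}"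
proof -
  define F0 where "F0 = {X\<in>F. x \<notin> X}"
  define Fx where "Fx = {X\<in>F. x \<in> X}"
  have split: "F = F0 \<union> Fx" "F0 \<inter> Fx = {}" unfolding F0_def Fx_def by auto
  have inj: "inj_on (\<lambda>X. X - {x}) Fx" unfolding inj_on_def Fx_def by blast
  have "(\<lambda>X. X - {x}) ` F0 = F0"
    unfolding F0_def by (rule image_cong[OF refl, of _ _ id, simplified]) auto
  hence union: "(\<lambda>X. X - {x}) ` F = F0 \<union> (\<lambda>X. X - {x}) ` Fx"
    using split(1) by (metis image_Un)
  have inter: "{X\<in>F. x \<notin> X \<and> insert x X \<in> F} = F0 \<inter> (\<lambda>X. X - {x}) ` Fx"
  proof (intro set_eqI iffI)
    fix X assume "X \<in> {X\<in>F. x \<notin> X \<and> insert x X \<in> F}"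
    then show "X \<in> F0 \<inter> (\<lambda>X. X - {x}) ` Fx"
      unfolding F0_def Fx_def by (auto intro!: image_eqI[of _ _ "insert x X"])
  next
    fix X assume "X \<in> F0 \<inter> (\<lambda>X. X - {x}) ` Fx"
    then show "X \<in> {X\<in>F. x \<notin> X \<and> insert x X \<in> F}"
      unfolding F0_def Fx_def by (auto simp: insert_absorb)
  qed
  have fin: "finite F0" "finite Fx" using assms split(1) by auto
  have "card F = card F0 + card Fx" using split fin by (simp add: card_Un_disjoint)
  also have "\<dots> = card F0 + card ((\<lambda>X. X - {x}) ` Fx)" by (simp add: card_image[OF inj])
  also have "\<dots> = card ((\<lambda>X. X - {x}) ` F) + card {X\<in>F. x \<notin> X \<and> insert x X \<in> F}"
    unfolding union inter using card_Un_Int[OF fin(1) finite_imageI[OF fin(2)]] by simp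
  finally show ?thesis .
qed

lemma shatters_of_shatters_remove:
  assumes "x \<notin> B" "shatters ((\<lambda>X. X - {x}) ` F) B"
  shows "shatters F B"
  unfolding shatters_def
proof (intro allI impI)
  fix C assume "C \<subseteq> B"
  then obtain X where "X \<in> F" "(X - {x}) \<inter> B = C" using assms(2) unfolding shatters_def by blast
  then show "\<exists>X\<in>F. X \<inter> B = C" using assms(1) by blast
qed

lemma shatters_insert_of_shatters_pairs:
  assumes "x \<notin> B" "shatters {X\<in>F. x \<notin> X \<and> insert x X \<in> F} B"
  shows "shatters F (insert x B)"
  unfolding shatters_def
proof (intro allI impI)
  fix C assume C: "C \<subseteq> insert x B"
  then have "C - {x} \<subseteq> B" by blast
  then obtain Y where Y: "Y \<in> F" "x \<notin> Y" "insert x Y \<in> F" "Y \<inter> B = C - {x}"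
    using assms(2) unfolding shatters_def by blast
  show "\<exists>X\<in>F. X \<inter> insert x B = C"
  proof (cases "x \<in> C")
    case True
    then show ?thesis using Y C by (intro bexI[of _ "insert x Y"]) auto
  next
    case False
    then show ?thesis using Y C by (intro bexI[of _ Y]) auto
  qed
qed

lemma card_le_card_shattered_subsets:
  assumes "finite A" "F \<subseteq> Pow A"
  shows "card F \<le> card {B. B \<subseteq> A \<and> shatters F B}"
  using assms
proof (induction A arbitrary: F rule: finite_induct)
  case empty
  then have "F = {} \<or> F = {{}}" by (simp add: subset_singleton_iff)
  moreover have "{B. B \<subseteq> {} \<and> shatters {{}} B} = {{}}" by (auto simp: shatters_def)
  ultimately show ?case by (metis card.empty order_refl zero_le)
next
  case (insert x A)
  define F1 where "F1 = (\<lambda>X. X - {x}) ` F"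
  define F2 where "F2 = {X\<in>F. x \<notin> X \<and> insert x X \<in> F}"
  define Sh1 where "Sh1 = {B. B \<subseteq> A \<and> shatters F1 B}"
  define Sh2 where "Sh2 = {B. B \<subseteq> A \<and> shatters F2 B}"
  have finF: "finite F"
    using insert.hyps(1) insert.prems finite_subset by blast
  have "F1 \<subseteq> Pow A" "F2 \<subseteq> Pow A"
    using insert.prems unfolding F1_def F2_def by blast+
  then have "card F1 \<le> card Sh1" "card F2 \<le> card Sh2"
    unfolding Sh1_def Sh2_def by (simp_all only: insert.IH)
  hence "card F \<le> card Sh1 + card Sh2"
    using card_eq_card_remove_plus_card_pairs[OF finF, of x] unfolding F1_def F2_def by linarith
  also have "\<dots> = card (Sh1 \<union> insert x ` Sh2)"
  proof -
    have "inj_on (insert x) Sh2"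
      using insert.hyps(2) unfolding Sh2_def inj_on_def by (blast dest: insert_ident)
    moreover have "Sh1 \<inter> insert x ` Sh2 = {}" using insert.hyps(2) unfolding Sh1_def by auto
    ultimately show ?thesis
      using insert.hyps(1) by (simp add: card_Un_disjoint card_image Sh1_def Sh2_def)
  qed
  also have "\<dots> \<le> card {B. B \<subseteq> insert x A \<and> shatters F B}"
  proof (rule card_mono)
    show "finite {B. B \<subseteq> insert x A \<and> shatters F B}" using insert.hyps(1) by simp
    have "Sh1 \<subseteq> {B. B \<subseteq> insert x A \<and> shatters F B}"
      using insert.hyps(2) shatters_of_shatters_remove[of x _ F] unfolding Sh1_def F1_def by blast
    moreover have "insert x B \<in> {B. B \<subseteq> insert x A \<and> shatters F B}" if "B \<in> Sh2" for B
      using that insert.hyps(2) shatters_insert_of_shatters_pairs[of x B F] unfolding Sh2_def F2_def by blast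
    ultimately show "Sh1 \<union> insert x ` Sh2 \<subseteq> {B. B \<subseteq> insert x A \<and> shatters F B}" by blast
  qed
  finally show ?case .
qed

subsection \<open>Threshold dichotomies of linear functions\<close>

lemma sum_fun_apply: "(\<Sum>x\<in>A. f x) i = (\<Sum>x\<in>A. (f x i :: 'b::comm_monoid_add))"
  by (induction A rule: infinite_finite_induct) auto

lemma exists_nontrivial_relation_if_card_gt_support:
  fixes U :: "('i \<Rightarrow> 'a::field) set"
  assumes "finite S" "finite U" "card S < card U"
    and support: "\<And>u i. u \<in> U \<Longrightarrow> i \<notin> S \<Longrightarrow> u i = 0"
  shows "\<exists>c. (\<exists>u\<in>U. c u \<noteq> 0) \<and> (\<forall>i. (\<Sum>u\<in>U. c u * u i) = 0)"
proof -
  interpret V: vector_space "\<lambda>(c::'a) (f::'i \<Rightarrow> 'a). (\<lambda>i. c * f i)"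
    by unfold_locales (auto simp: fun_eq_iff algebra_simps)
  define e where "e i = (\<lambda>l. if l = i then 1 else 0 :: 'a)" for i :: 'i
  have span: "U \<subseteq> V.span (e ` S)"
  proof
    fix u assume "u \<in> U"
    then have "u = (\<Sum>i\<in>S. (\<lambda>l. u i * e i l))"
      using assms(1) support unfolding e_def by (auto simp: fun_eq_iff sum_fun_apply if_distrib cong: if_cong)
    also have "\<dots> \<in> V.span (e ` S)" by (intro V.span_sum V.span_scale V.span_base) auto
    finally show "u \<in> V.span (e ` S)" .
  qed
  have "V.dependent U"
  proof (rule ccontr)
    assume "\<not> V.dependent U"
    from V.independent_span_bound[OF _ this span] have "card U \<le> card (e ` S)"
      using assms(1) by simp
    with card_image_le[OF assms(1), of e] assms(3) show False by simp
  qed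
  then obtain c where "\<exists>u\<in>U. c u \<noteq> 0" "(\<Sum>u\<in>U. (\<lambda>i. c u * u i)) = 0"
    using V.dependent_finite[OF assms(2)] by auto
  then show ?thesis by (intro exI[of _ c]) (simp add: fun_eq_iff sum_fun_apply)
qed

lemma exists_nontrivial_solution_homogeneous:
  fixes v :: "'i \<Rightarrow> 'j \<Rightarrow> 'a::field"
  assumes "finite S" "finite B" "card S < card B"
  shows "\<exists>\<alpha>. (\<exists>j\<in>B. \<alpha> j \<noteq> 0) \<and> (\<forall>i\<in>S. (\<Sum>j\<in>B. \<alpha> j * v i j) = 0)"
proof -
  define u where "u j = (\<lambda>i. if i \<in> S then v i j else 0)" for j
  show ?thesis
  proof (cases "inj_on u B")
    case False
    then obtain j1 j2 where j: "j1 \<in> B" "j2 \<in> B" "j1 \<noteq> j2" "u j1 = u j2"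
      unfolding inj_on_def by blast
    define \<alpha> where "\<alpha> j = (if j = j1 then 1 else if j = j2 then -1 else 0 :: 'a)" for j
    have "(\<Sum>j\<in>B. \<alpha> j * v i j) = 0" if "i \<in> S" for i
    proof -
      have "(\<Sum>j\<in>B. \<alpha> j * v i j) = (\<Sum>j\<in>{j1,j2}. \<alpha> j * v i j)"
        using j assms(2) by (intro sum.mono_neutral_right) (auto simp: \<alpha>_def)
      moreover have "v i j1 = v i j2" using j(4) that unfolding u_def by (metis (mono_tags))
      ultimately show ?thesis using j(3) by (simp add: \<alpha>_def)
    qed
    then show ?thesis using j(1) by (intro exI[of _ \<alpha>]) (auto simp: \<alpha>_def)
  next
    case True
    then have "card S < card (u ` B)" using assms(3) by (simp add: card_image)
    moreover have "x i = 0" if "x \<in> u ` B" "i \<notin> S" for x i using that by (auto simp: u_def)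
    ultimately have "\<exists>c. (\<exists>x\<in>u ` B. c x \<noteq> 0) \<and> (\<forall>i. (\<Sum>x\<in>u ` B. c x * x i) = 0)"
      by (rule exists_nontrivial_relation_if_card_gt_support[OF assms(1) finite_imageI[OF assms(2)]])
    then obtain c where c: "\<exists>x\<in>u ` B. c x \<noteq> 0" "\<forall>i. (\<Sum>x\<in>u ` B. c x * x i) = 0"
      by blast
    have "(\<Sum>j\<in>B. c (u j) * v i j) = 0" if "i \<in> S" for i
    proof -
      have "(\<Sum>j\<in>B. c (u j) * v i j) = (\<Sum>j\<in>B. c (u j) * u j i)"
        using that by (simp add: u_def)
      also have "\<dots> = 0" using c(2) by (simp add: sum.reindex[OF True])
      finally show ?thesis .
    qed
    with c(1) show ?thesis by (intro exI[of _ "\<lambda>j. c (u j)"]) auto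
  qed
qed

definition threshold_patterns ::
  "('i \<Rightarrow> 'j \<Rightarrow> real) \<Rightarrow> ('j \<Rightarrow> real) \<Rightarrow> 'i set \<Rightarrow> 'j set \<Rightarrow> 'j set set" where
  "threshold_patterns v t S J = {{j\<in>J. t j < (\<Sum>i\<in>S. w i * v i j)} | w.
      \<forall>j\<in>J. (\<Sum>i\<in>S. w i * v i j) \<noteq> t j}"

lemma threshold_patternsI:
  "\<forall>j\<in>J. (\<Sum>i\<in>S. w i * v i j) \<noteq> t j \<Longrightarrow>
    {j\<in>J. t j < (\<Sum>i\<in>S. w i * v i j)} \<in> threshold_patterns v t S J"
  unfolding threshold_patterns_def by blast

lemma threshold_patternsE:
  assumes "C \<in> threshold_patterns v t S J"
  obtains w where "\<forall>j\<in>J. (\<Sum>i\<in>S. w i * v i j) \<noteq> t j" "C = {j\<in>J. t j < (\<Sum>i\<in>S. w i * v i j)}"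
  using assms unfolding threshold_patterns_def by blast

lemma threshold_patterns_subset_Pow: "threshold_patterns v t S J \<subseteq> Pow J"
  unfolding threshold_patterns_def by blast

lemma Int_mem_threshold_patterns:
  assumes "X \<in> threshold_patterns v t S J" "B \<subseteq> J"
  shows "X \<inter> B \<in> threshold_patterns v t S B"
  using assms unfolding threshold_patterns_def by blast

lemma card_le_if_Pow_subset_threshold_patterns:
  assumes "finite S" "finite B" "Pow B \<subseteq> threshold_patterns v t S B"
  shows "card B \<le> card S"
proof (rule ccontr)
  assume "\<not> card B \<le> card S"
  then obtain \<alpha>0 where \<alpha>0: "\<exists>j\<in>B. \<alpha>0 j \<noteq> 0" "\<forall>i\<in>S. (\<Sum>j\<in>B. \<alpha>0 j * v i j) = 0"
    using exists_nontrivial_solution_homogeneous[OF assms(1,2), of v] by (auto simp: not_le)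
  \<comment> \<open>Replacing \<alpha>0 by -\<alpha>0 if necessary, the thresholds have nonnegative weight under \<alpha>.\<close>
  obtain \<alpha> where \<alpha>: "\<exists>j\<in>B. \<alpha> j \<noteq> 0" "\<forall>i\<in>S. (\<Sum>j\<in>B. \<alpha> j * v i j) = 0"
    and t_nonneg: "(\<Sum>j\<in>B. \<alpha> j * t j) \<ge> 0"
  proof (cases "(\<Sum>j\<in>B. \<alpha>0 j * t j) \<ge> 0")
    case True
    then show ?thesis using that \<alpha>0 by blast
  next
    case False
    then show ?thesis using that[of "\<lambda>j. - \<alpha>0 j"] \<alpha>0 by (simp add: sum_negf)
  qed
  have "{j\<in>B. \<alpha> j > 0} \<in> threshold_patterns v t S B" by (rule subsetD[OF assms(3)]) auto
  then obtain w where w_ne: "\<forall>j\<in>B. (\<Sum>i\<in>S. w i * v i j) \<noteq> t j"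
    and w_pos: "{j\<in>B. \<alpha> j > 0} = {j\<in>B. t j < (\<Sum>i\<in>S. w i * v i j)}"
    by (rule threshold_patternsE)
  define d where "d j = \<alpha> j * ((\<Sum>i\<in>S. w i * v i j) - t j)" for j
  have d_sign: "d j \<ge> 0" "\<alpha> j \<noteq> 0 \<Longrightarrow> d j > 0" if "j \<in> B" for j
  proof -
    have "t j < (\<Sum>i\<in>S. w i * v i j) \<longleftrightarrow> \<alpha> j > 0" using w_pos that by blast
    then show "d j \<ge> 0" "\<alpha> j \<noteq> 0 \<Longrightarrow> d j > 0"
      using w_ne that unfolding d_def by (auto simp: zero_less_mult_iff zero_le_mult_iff)
  qed
  have "(\<Sum>j\<in>B. d j) = (\<Sum>j\<in>B. \<Sum>i\<in>S. w i * (\<alpha> j * v i j)) - (\<Sum>j\<in>B. \<alpha> j * t j)"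
    by (simp add: d_def right_diff_distrib sum_subtractf sum_distrib_left mult_ac)
  also have "\<dots> = (\<Sum>i\<in>S. w i * (\<Sum>j\<in>B. \<alpha> j * v i j)) - (\<Sum>j\<in>B. \<alpha> j * t j)"
    by (subst sum.swap) (simp add: sum_distrib_left)
  also have "\<dots> \<le> 0" using \<alpha>(2) t_nonneg by simp
  moreover obtain j0 where "j0 \<in> B" "\<alpha> j0 \<noteq> 0" using \<alpha>(1) by blast
  then have "(\<Sum>j\<in>B. d j) > 0" using d_sign by (intro sum_pos2[OF assms(2)]) auto
  ultimately show False by linarith
qed

lemma card_threshold_patterns_le:
  assumes "finite S" "finite J"
  shows "card (threshold_patterns v t S J) \<le> (card J + 1) ^ card S"
proof -
  have "card (threshold_patterns v t S J) \<le> card {B. B \<subseteq> J \<and> shatters (threshold_patterns v t S J) B}"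
    by (rule card_le_card_shattered_subsets[OF assms(2) threshold_patterns_subset_Pow])
  also have "\<dots> \<le> card {B. B \<subseteq> J \<and> card B \<le> card S}"
  proof (intro card_mono subsetI)
    show "finite {B. B \<subseteq> J \<and> card B \<le> card S}" using assms(2) by simp
  next
    fix B assume "B \<in> {B. B \<subseteq> J \<and> shatters (threshold_patterns v t S J) B}"
    then have BJ: "B \<subseteq> J" and "shatters (threshold_patterns v t S J) B" by auto
    then have "Pow B \<subseteq> threshold_patterns v t S B"
      unfolding shatters_def by (metis Int_mem_threshold_patterns PowD subsetI)
    then have "card B \<le> card S"
      by (rule card_le_if_Pow_subset_threshold_patterns[OF assms(1) finite_subset[OF BJ assms(2)]])
    with BJ show "B \<in> {B. B \<subseteq> J \<and> card B \<le> card S}" by simp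
  qed
  also have "\<dots> \<le> (card J + 1) ^ card S" by (rule card_subsets_card_le[OF assms(2)])
  finally show ?thesis .
qed

subsection \<open>Sparse combinations of kernels\<close>

lemma sparse_comb_class_obtain_support:
  assumes "K \<in> sparse_comb_class Ks N k"
  obtains S w where "S \<subseteq> {1..N}" "card S \<le> k" "K = (\<lambda>x y. \<Sum>i\<in>S. w i * Ks i x y)"
proof -
  obtain w where K: "K = (\<lambda>x y. \<Sum>i=1..N. w i * Ks i x y)"
    and card_le: "card {i\<in>{1..N}. w i \<noteq> 0} \<le> k"
    using assms unfolding sparse_comb_class_def by blast
  have "K = (\<lambda>x y. \<Sum>i\<in>{i\<in>{1..N}. w i \<noteq> 0}. w i * Ks i x y)"
    unfolding K by (intro ext sum.mono_neutral_right) auto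
  with card_le show ?thesis by (intro that) auto
qed

lemma pseudo_shatters_obtain_thresholds:
  assumes "pseudo_shatters KK ps"
  obtains t where "\<And>C. C \<subseteq> {..<length ps} \<Longrightarrow> \<exists>K\<in>KK. \<forall>j<length ps.
      K (fst (ps ! j)) (snd (ps ! j)) \<noteq> t j \<and> (t j < K (fst (ps ! j)) (snd (ps ! j)) \<longleftrightarrow> j \<in> C)"
proof -
  obtain t where t: "\<forall>b. (\<forall>j<length ps. b j \<in> {-1, 1}) \<longrightarrow>
      (\<exists>K\<in>KK. \<forall>j<length ps. sgn (K (fst (ps ! j)) (snd (ps ! j)) - t j) = b j)"
    using assms unfolding pseudo_shatters_def by (elim exE)
  show ?thesis
  proof (rule that)
    fix C :: "nat set"
    obtain K where "K \<in> KK"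
      and sgn_eq: "\<forall>j<length ps. sgn (K (fst (ps ! j)) (snd (ps ! j)) - t j) = (if j \<in> C then 1 else -1)"
      using spec[OF t, of "\<lambda>j. if j \<in> C then 1 else -1"] by auto
    moreover have "K (fst (ps ! j)) (snd (ps ! j)) \<noteq> t j \<and> (t j < K (fst (ps ! j)) (snd (ps ! j)) \<longleftrightarrow> j \<in> C)"
      if "j < length ps" for j
    proof (cases "j \<in> C")
      case True
      then show ?thesis using sgn_eq[rule_format, OF that] by (simp add: sgn_1_pos)
    next
      case False
      then show ?thesis using sgn_eq[rule_format, OF that] by (simp add: sgn_1_neg)
    qed
    ultimately show "\<exists>K\<in>KK. \<forall>j<length ps.
        K (fst (ps ! j)) (snd (ps ! j)) \<noteq> t j \<and> (t j < K (fst (ps ! j)) (snd (ps ! j)) \<longleftrightarrow> j \<in> C)"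
      by blast
  qed
qed

lemma pseudo_shatters_sparse_comb_obtain_cover:
  assumes "pseudo_shatters (sparse_comb_class Ks N k) ps"
  obtains t where "Pow {..<length ps} \<subseteq> (\<Union>S\<in>{S. S \<subseteq> {1..N} \<and> card S \<le> k}.
      threshold_patterns (\<lambda>i j. Ks i (fst (ps ! j)) (snd (ps ! j))) t S {..<length ps})"
proof -
  obtain t where t: "\<And>C. C \<subseteq> {..<length ps} \<Longrightarrow> \<exists>K\<in>sparse_comb_class Ks N k. \<forall>j<length ps.
      K (fst (ps ! j)) (snd (ps ! j)) \<noteq> t j \<and> (t j < K (fst (ps ! j)) (snd (ps ! j)) \<longleftrightarrow> j \<in> C)"
    using pseudo_shatters_obtain_thresholds[OF assms] by blast
  define v where "v i j = Ks i (fst (ps ! j)) (snd (ps ! j))" for i j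
  have "C \<in> (\<Union>S\<in>{S. S \<subseteq> {1..N} \<and> card S \<le> k}. threshold_patterns v t S {..<length ps})"
    if C: "C \<subseteq> {..<length ps}" for C
  proof -
    from t[OF C] obtain K where K_mem: "K \<in> sparse_comb_class Ks N k" and K: "\<forall>j<length ps.
        K (fst (ps ! j)) (snd (ps ! j)) \<noteq> t j \<and> (t j < K (fst (ps ! j)) (snd (ps ! j)) \<longleftrightarrow> j \<in> C)"
      by blast
    obtain S w where S: "S \<subseteq> {1..N}" "card S \<le> k" and K_eq: "K = (\<lambda>x y. \<Sum>i\<in>S. w i * Ks i x y)"
      by (rule sparse_comb_class_obtain_support[OF K_mem])
    have M: "\<forall>j<length ps. (\<Sum>i\<in>S. w i * v i j) \<noteq> t j \<and> (t j < (\<Sum>i\<in>S. w i * v i j) \<longleftrightarrow> j \<in> C)"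
      using K unfolding K_eq v_def by simp
    then have C_eq: "C = {j\<in>{..<length ps}. t j < (\<Sum>i\<in>S. w i * v i j)}" using C by blast
    have "{j\<in>{..<length ps}. t j < (\<Sum>i\<in>S. w i * v i j)} \<in> threshold_patterns v t S {..<length ps}"
      using M by (intro threshold_patternsI) simp
    then have "C \<in> threshold_patterns v t S {..<length ps}" by (simp only: C_eq)
    with S show ?thesis by blast
  qed
  then have "Pow {..<length ps} \<subseteq>
      (\<Union>S\<in>{S. S \<subseteq> {1..N} \<and> card S \<le> k}. threshold_patterns v t S {..<length ps})"
    by blast
  then show ?thesis unfolding v_def[abs_def] by (rule that)
qed

lemma two_pow_le_if_pseudo_shatters_sparse_comb:
  assumes "pseudo_shatters (sparse_comb_class Ks N k) ps"
  shows "2 ^ length ps \<le> (N + 1) ^ k * (length ps + 1) ^ k"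
proof -
  define r where "r = length ps"
  define supports where "supports = {S. S \<subseteq> {1..N} \<and> card S \<le> k}"
  obtain t where cover: "Pow {..<r} \<subseteq> (\<Union>S\<in>supports.
      threshold_patterns (\<lambda>i j. Ks i (fst (ps ! j)) (snd (ps ! j))) t S {..<r})"
    using pseudo_shatters_sparse_comb_obtain_cover[OF assms] unfolding r_def supports_def by blast
  let ?P = "\<lambda>S. threshold_patterns (\<lambda>i j. Ks i (fst (ps ! j)) (snd (ps ! j))) t S {..<r}"
  have finite_supports: "finite supports" unfolding supports_def by simp
  have "(\<Union>S\<in>supports. ?P S) \<subseteq> Pow {..<r}" using threshold_patterns_subset_Pow by blast
  then have finite_patterns: "finite (\<Union>S\<in>supports. ?P S)" by (rule finite_subset) simp
  have "(2::nat) ^ r = card (Pow {..<r})" by (simp add: card_Pow)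
  also have "\<dots> \<le> card (\<Union>S\<in>supports. ?P S)" by (rule card_mono[OF finite_patterns cover])
  also have "\<dots> \<le> (\<Sum>S\<in>supports. card (?P S))" by (rule card_UN_le[OF finite_supports])
  also have "\<dots> \<le> (\<Sum>S\<in>supports. (r + 1) ^ k)"
  proof (rule sum_mono)
    fix S assume "S \<in> supports"
    then have "finite S" "card S \<le> k" unfolding supports_def by (auto intro: finite_subset)
    have "card (?P S) \<le> (card {..<r} + 1) ^ card S"
      by (rule card_threshold_patterns_le[OF \<open>finite S\<close> finite_lessThan])
    also have "\<dots> \<le> (r + 1) ^ k" using \<open>card S \<le> k\<close> by (simp add: power_increasing)
    finally show "card (?P S) \<le> (r + 1) ^ k" .
  qed
  also have "\<dots> \<le> (N + 1) ^ k * (r + 1) ^ k"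
    using card_subsets_card_le[of "{1..N}" k] unfolding supports_def by simp
  finally show ?thesis unfolding r_def .
qed

subsection \<open>Solving the growth inequality\<close>

lemma ln_le_tangent:
  fixes a z :: real
  assumes "0 < a" "0 < z"
  shows "ln z \<le> ln a + z / a - 1"
  using ln_le_minus_one[of "z / a"] assms by (simp add: ln_div)

lemma le_of_linear_le_log:
  fixes x b c d k :: real
  assumes "0 \<le> k" "0 \<le> b" "k < c * (b + 1)"
    and at_b: "d + k * ln (b + 1) \<le> c * b"
    and at_x: "c * x \<le> d + k * ln (x + 1)"
  shows "x \<le> b"
proof (rule ccontr)
  assume "\<not> x \<le> b"
  then have "b < x" by simp
  have "k * ln (x + 1) \<le> k * (ln (b + 1) + (x + 1) / (b + 1) - 1)"
    using ln_le_tangent[of "b + 1" "x + 1"] \<open>b < x\<close> assms(1,2) by (intro mult_left_mono) auto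
  also have "\<dots> = k * ln (b + 1) + k / (b + 1) * (x - b)"
    using assms(2) by (simp add: field_simps)
  also have "\<dots> < k * ln (b + 1) + c * (x - b)"
    using assms(2,3) \<open>b < x\<close> by (intro add_strict_left_mono mult_strict_right_mono) (auto simp: field_simps)
  finally show False using at_b at_x by (simp add: algebra_simps)
qed

lemma ln_growth_at_threshold:
  fixes k n :: real
  assumes "1 \<le> k" "1 \<le> n"
  defines "L \<equiv> ln k + ln n + 2 * ln 2 + 1"
  shows "k * ln (n + 1) + k * ln (2 * k * L + 1) \<le> ln 2 * (2 * k * L)"
proof -
  have ln2: "2/3 \<le> ln (2::real)" by (rule ln2_ge_two_thirds)
  have L_eq: "L = ln k + ln n + 2 * ln 2 + 1" unfolding L_def ..
  have L_nonneg: "0 \<le> L" using assms(1,2) ln2 unfolding L_def by simp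
  have "ln (n + 1) \<le> ln (2 * n)" using assms(2) by simp
  then have ln_n: "ln (n + 1) \<le> ln 2 + ln n" using assms(2) by (simp add: ln_mult)
  have "2 * k * L + 1 \<le> k * (2 * L + 1)" using assms(1) by (simp add: algebra_simps)
  moreover have "0 < 2 * k * L + 1"
    using L_nonneg assms(1) by (intro add_nonneg_pos mult_nonneg_nonneg) auto
  ultimately have "ln (2 * k * L + 1) \<le> ln (k * (2 * L + 1))" by (rule ln_mono)
  also have "\<dots> = ln k + ln (2 * L + 1)" using L_nonneg assms(1) by (simp add: ln_mult)
  also have "ln (2 * L + 1) \<le> ln 6 + L / 3 - 5 / 6"
    using ln_le_tangent[of 6 "2 * L + 1"] L_nonneg by (simp add: field_simps)
  also have "ln (6::real) = ln 2 + ln 3" using ln_mult[of 2 "3::real"] by simp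
  also have "ln (3::real) \<le> ln 2 + 1/2" using ln_le_tangent[of 2 "3::real"] by simp
  finally have ln_kL: "ln (2 * k * L + 1) \<le> ln k + 2 * ln 2 + L / 3 - 1 / 3" by simp
  have "L * (2/3) \<le> L * ln 2" using L_nonneg ln2 by (intro mult_left_mono)
  then have "ln (n + 1) + ln (2 * k * L + 1) \<le> 2 * (L * ln 2)"
    using ln_n ln_kL ln_2_less_1 L_eq by linarith
  then have "k * (ln (n + 1) + ln (2 * k * L + 1)) \<le> k * (2 * (L * ln 2))"
    using assms(1) by (intro mult_left_mono) auto
  then show ?thesis by (simp add: algebra_simps)
qed

lemma le_sparse_bound_of_log_ineq:
  fixes r :: real and k N :: nat
  assumes "k \<le> N" "0 \<le> r"
    and "r * ln 2 \<le> real k * ln (real N + 1) + real k * ln (r + 1)"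
  shows "r \<le> 2 * real k * ln (real k) + 2 * real k * ln (4 * exp 1 * real N)"
proof (cases "k = 0")
  case True
  then show ?thesis using assms(3) by (simp add: mult_le_0_iff)
next
  case False
  then have k: "1 \<le> real k" and N: "1 \<le> real N" using assms(1) by auto
  define L where "L = ln (real k) + ln (real N) + 2 * ln 2 + 1"
  have ln2: "2/3 \<le> ln (2::real)" by (rule ln2_ge_two_thirds)
  have "0 \<le> ln (real k)" "0 \<le> ln (real N)" using k N by auto
  then have L: "7/3 \<le> L" using ln2 unfolding L_def by linarith
  have "ln (4 * exp 1 * real N) = ln 4 + 1 + ln (real N)" using N by (simp add: ln_mult)
  moreover have "ln (4::real) = 2 * ln 2" using ln_realpow[of 2 2] by simp
  ultimately have bound_eq: "2 * real k * ln (real k) + 2 * real k * ln (4 * exp 1 * real N) = 2 * real k * L"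
    by (simp add: L_def algebra_simps)
  have "2 * real k * (7/3) \<le> 2 * real k * L" using L by (intro mult_left_mono) auto
  then have "real k < 2/3 * (2 * real k * L) + 2/3" using k by linarith
  also have "\<dots> = 2/3 * (2 * real k * L + 1)" by simp
  also have "\<dots> \<le> ln 2 * (2 * real k * L + 1)"
    using L k ln2 by (intro mult_right_mono) auto
  finally have slope: "real k < ln 2 * (2 * real k * L + 1)" .
  show ?thesis unfolding bound_eq
  proof (rule le_of_linear_le_log[where c = "ln 2" and d = "real k * ln (real N + 1)"])
    show "0 \<le> real k" "0 \<le> 2 * real k * L" using L by auto
    show "real k < ln 2 * (2 * real k * L + 1)" by (rule slope)
    show "real k * ln (real N + 1) + real k * ln (2 * real k * L + 1) \<le> ln 2 * (2 * real k * L)"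
      using ln_growth_at_threshold[OF k N] unfolding L_def .
    show "ln 2 * r \<le> real k * ln (real N + 1) + real k * ln (r + 1)"
      using assms(3) by (simp add: mult.commute)
  qed
qed

lemma ereal_pseudodim_le:
  assumes "0 \<le> c" "\<And>ps. pseudo_shatters KK ps \<Longrightarrow> real (length ps) \<le> c"
  shows "ereal_of_enat (pseudodim KK) \<le> ereal c"
proof -
  have "pseudodim KK \<le> enat (nat \<lfloor>c\<rfloor>)"
    unfolding pseudodim_def
  proof (rule Sup_least)
    fix x assume "x \<in> {enat (length ps) |ps. distinct ps \<and> pseudo_shatters KK ps}"
    then obtain ps where "x = enat (length ps)" "pseudo_shatters KK ps" by blast
    then show "x \<le> enat (nat \<lfloor>c\<rfloor>)" using assms(2) by (simp add: le_nat_floor)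
  qed
  then have "ereal_of_enat (pseudodim KK) \<le> ereal (real (nat \<lfloor>c\<rfloor>))"
    by (metis ereal_of_enat_le_iff ereal_of_enat_simps(1))
  also have "\<dots> \<le> ereal c" using assms(1) by simp
  finally show ?thesis .
qed

lemma log_ineq_if_pseudo_shatters_sparse_comb:
  assumes "pseudo_shatters (sparse_comb_class Ks N k) ps"
  shows "real (length ps) * ln 2 \<le> real k * ln (real N + 1) + real k * ln (real (length ps) + 1)"
proof -
  have "real (2 ^ length ps) \<le> real ((N + 1) ^ k * (length ps + 1) ^ k)"
    using two_pow_le_if_pseudo_shatters_sparse_comb[OF assms] by (simp only: of_nat_le_iff)
  then have "(2::real) ^ length ps \<le> ((real N + 1) * (real (length ps) + 1)) ^ k"
    by (simp add: power_mult_distrib add.commute)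
  then have "ln (2 ^ length ps) \<le> ln (((real N + 1) * (real (length ps) + 1)) ^ k)" by simp
  also have "\<dots> = real k * (ln (real N + 1) + ln (real (length ps) + 1))"
    by (simp add: ln_realpow ln_mult del: of_nat_add)
  finally show ?thesis by (simp add: ln_realpow algebra_simps)
qed

theorem lemma4:
  fixes Ks :: "nat \<Rightarrow> 'x \<Rightarrow> 'x \<Rightarrow> real" and N k :: nat
  assumes "\<And>i. i \<in> {1..N} \<Longrightarrow> is_kernel (Ks i)"
    and "k \<le> N"
  shows "ereal_of_enat (pseudodim (sparse_comb_class Ks N k))
           \<le> ereal (2 * real k * ln (real k) + 2 * real k * ln (4 * exp 1 * real N))"
proof (rule ereal_pseudodim_le)
  show "0 \<le> 2 * real k * ln (real k) + 2 * real k * ln (4 * exp 1 * real N)"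
    using le_sparse_bound_of_log_ineq[OF assms(2), of 0] by simp
  fix ps assume "pseudo_shatters (sparse_comb_class Ks N k) ps"
  then show "real (length ps) \<le> 2 * real k * ln (real k) + 2 * real k * ln (4 * exp 1 * real N)"
    by (intro le_sparse_bound_of_log_ineq[OF assms(2)] log_ineq_if_pseudo_shatters_sparse_comb) auto
qed

end
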